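(* Let $d:\mathbb{R}\to\mathbb{R}$ be a derivation and $\alpha\ge1$. Then the function $F_{d,\alpha}:\mathbb{R}_+\to\mathbb{R}_+$, $F_{d,\alpha}(x)=x^\alpha\exp\big(d(x)/x\big)$, is multiplicative and Jensen convex, i.e. $F_{d,\alpha}\big(\frac{x+y}{2}\big)\le\frac{F_{d,\alpha}(x)+F_{d,\alpha}(y)}{2}$ for all $x,y>0$. Hence, if $d$ is a nonzero derivation, then $F_{d,\alpha}$ is a discontinuous function which is Jensen convex and multiplicative.
   Context: $\mathbb{R}_+=]0,\infty[$. A derivation is a function $d:\mathbb{R}\to\mathbb{R}$ that is additive and satisfies $d(xy)=xd(y)+yd(x)$ for all $x,y\in\mathbb{R}$. A function $m:\mathbb{R}_+\to\mathbb{R}_+$ is multiplicative if $m(xy)=m(x)m(y)$ for all $x,y>0$. *)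

theory Defs
  imports "HOL-Analysis.Analysis"
begin

definition derivation :: "(real \<Rightarrow> real) \<Rightarrow> bool" where
  "derivation d \<longleftrightarrow> (\<forall>x y. d (x + y) = d x + d y) \<and> (\<forall>x y. d (x * y) = x * d y + y * d x)"

definition multiplicative_pos :: "(real \<Rightarrow> real) \<Rightarrow> bool" where
  "multiplicative_pos m \<longleftrightarrow> (\<forall>x>0. m x > 0) \<and> (\<forall>x>0. \<forall>y>0. m (x * y) = m x * m y)"

definition jensen_convex_pos :: "(real \<Rightarrow> real) \<Rightarrow> bool" where
  "jensen_convex_pos f \<longleftrightarrow> (\<forall>x>0. \<forall>y>0. f ((x + y) / 2) \<le> (f x + f y) / 2)"

definition F_da :: "(real \<Rightarrow> real) \<Rightarrow> real \<Rightarrow> real \<Rightarrow> real" where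
  "F_da d \<alpha> x = x powr \<alpha> * exp (d x / x)"

end

theory Submission
  imports Defs
begin

text \<open>
  Since \<open>d(xy)/(xy) = d(x)/x + d(y)/y\<close>, the function \<open>F\<^sub>d\<^sub>,\<^sub>\<alpha>\<close> is multiplicative.
  It is the restriction of \<open>G(x, u) = x\<^sup>\<alpha> exp(u/x)\<close>, which is jointly convex on
  \<open>\<real>\<^sub>+ \<times> \<real>\<close> for \<open>\<alpha> \<ge> 1\<close>, to the graph of \<open>d\<close>; as \<open>d\<close> is \<open>\<rat>\<close>-linear, the graph is
  closed under midpoints, so \<open>F\<^sub>d\<^sub>,\<^sub>\<alpha>\<close> is Jensen convex. Finally \<open>d(x) = x (ln F(x) - \<alpha> ln x)\<close>,
  so continuity of \<open>F\<close> would make \<open>d\<close> continuous, and a continuous derivation vanishes,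
  being zero on the dense set \<open>\<rat>\<close>.
\<close>

lemma derivation_add: "derivation d \<Longrightarrow> d (x + y) = d x + d y"
  and derivation_mult: "derivation d \<Longrightarrow> d (x * y) = x * d y + y * d x"
  unfolding derivation_def by blast+

lemma derivation_uminus:
  assumes "derivation d" shows "d (- x) = - d x"
proof -
  have "d 0 = 0" using derivation_add[OF assms, of 0 0] by simp
  then show ?thesis using derivation_add[OF assms, of x "- x"] by simp
qed

lemma derivation_of_nat:
  assumes "derivation d" shows "d (of_nat n) = 0"
proof (induction n)
  case 0
  show ?case using derivation_add[OF assms, of 0 0] by simp
next
  case (Suc n)
  have "d 1 = 0" using derivation_mult[OF assms, of 1 1] by simp
  with Suc show ?case by (simp add: derivation_add[OF assms])
qed

lemma derivation_of_int:
  assumes "derivation d" shows "d (of_int k) = 0"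
  by (cases k rule: int_cases)
     (simp_all add: derivation_of_nat[OF assms] derivation_uminus[OF assms] del: of_nat_Suc)

lemma derivation_Rats:
  assumes "derivation d" and "r \<in> \<rat>" shows "d r = 0"
proof -
  obtain p q where r: "r = of_int p / of_int q" and "q > 0"
    using assms(2) by (rule Rats_cases')
  then have "of_int q * r = of_int p" and "of_int q \<noteq> (0::real)" by simp_all
  moreover have "d (of_int q * r) = of_int q * d r"
    by (simp add: derivation_mult[OF assms(1)] derivation_of_int[OF assms(1)])
  ultimately show ?thesis by (simp add: derivation_of_int[OF assms(1)])
qed

lemma derivation_mult_Rats:
  assumes "derivation d" and "q \<in> \<rat>" shows "d (q * x) = q * d x"
  by (simp add: derivation_mult[OF assms(1)] derivation_Rats[OF assms])

lemma derivation_midpoint: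
  assumes "derivation d" shows "d ((x + y) / 2) = (d x + d y) / 2"
  using derivation_mult_Rats[OF assms, of "1/2" "x + y"]
  by (simp add: derivation_add[OF assms])

lemma derivation_logarithmic:
  assumes "derivation d" and "x \<noteq> 0" and "y \<noteq> 0"
  shows "d (x * y) / (x * y) = d x / x + d y / y"
  using assms(2,3) by (simp add: derivation_mult[OF assms(1)] field_simps)

lemma derivation_isCont_eq_0:
  assumes "derivation d" and "isCont d x" shows "d x = 0"
proof -
  obtain r where r: "\<And>n. r n \<in> \<rat>" and "r \<longlonglongrightarrow> x"
    using Rats_closure_real closure_sequential by blast
  then have "(\<lambda>n. d (r n)) \<longlonglongrightarrow> d x"
    using assms(2) isCont_tendsto_compose by blast
  moreover have "(\<lambda>n. d (r n)) = (\<lambda>_. 0)"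
    using derivation_Rats[OF assms(1) r] by simp
  ultimately show ?thesis
    using LIMSEQ_unique tendsto_const by metis
qed

text \<open>Additivity spreads vanishing on the positive reals: \<open>d x = d (x + c) - d c\<close> for \<open>c = \<bar>x\<bar> + 1\<close>.\<close>
lemma derivation_continuous_on_pos_eq_0:
  assumes "derivation d" and "continuous_on {0<..} d" shows "d = (\<lambda>_. 0)"
proof
  have pos: "d c = 0" if "c > 0" for c
    using assms(2) that
    by (intro derivation_isCont_eq_0[OF assms(1)])
       (simp add: continuous_on_eq_continuous_at)
  fix x :: real
  have "d (x + (\<bar>x\<bar> + 1)) = d x + d (\<bar>x\<bar> + 1)" by (rule derivation_add[OF assms(1)])
  then show "d x = 0" using pos[of "x + (\<bar>x\<bar> + 1)"] pos[of "\<bar>x\<bar> + 1"] by simp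
qed

lemma convex_on_x_ln_x: "convex_on {0<..} (\<lambda>x::real. x * ln x)"
  by (intro f''_ge0_imp_convex derivative_eq_intros | simp)+

lemma powr_mult_exp:
  fixes x :: real
  assumes "x > 0" shows "x powr \<alpha> * exp c = x * exp ((\<alpha> - 1) * ln x + c)"
  using assms by (simp add: powr_def exp_add exp_diff left_diff_distrib)

lemma convex_on_powr_exp_divide:
  fixes \<alpha> :: real
  assumes "\<alpha> \<ge> 1"
  shows "convex_on ({0<..} \<times> UNIV) (\<lambda>(x, u). x powr \<alpha> * exp (u / x))"
proof
  show "convex ({0::real<..} \<times> (UNIV :: real set))"
    by (intro convex_Times convex_UNIV convex_real_interval)
  fix t :: real and p q :: "real \<times> real"
  assume t: "0 < t" "t < 1" and "p \<in> {0<..} \<times> UNIV" "q \<in> {0<..} \<times> UNIV"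
  then obtain x a y b where p: "p = (x, a)" and q: "q = (y, b)" and "x > 0" "y > 0"
    by (cases p, cases q) auto
  define m where "m = (1 - t) * x + t * y"
  define s where "s = t * y / m"
  define A where "A = (\<alpha> - 1) * ln x + a / x"
  define B where "B = (\<alpha> - 1) * ln y + b / y"
  have "m > 0" using t \<open>x > 0\<close> \<open>y > 0\<close> by (simp add: m_def add_pos_pos)
  have s: "0 \<le> s" "s \<le> 1" "1 - s = (1 - t) * x / m"
    using t \<open>x > 0\<close> \<open>y > 0\<close> \<open>m > 0\<close> by (auto simp: s_def m_def field_simps)
  have mean: "((1 - t) * a + t * b) / m = (1 - s) * (a / x) + s * (b / y)"
    using \<open>x > 0\<close> \<open>y > 0\<close> \<open>m > 0\<close> unfolding s(3) by (simp add: s_def field_simps)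
  text \<open>Convexity of \<open>x ln x\<close>, divided by \<open>m\<close>, bounds \<open>ln m\<close> by the \<open>s\<close>-weighted logarithms.\<close>
  have "m * ln m \<le> (1 - t) * (x * ln x) + t * (y * ln y)"
    using convex_onD[OF convex_on_x_ln_x, of t x y] t \<open>x > 0\<close> \<open>y > 0\<close> by (simp add: m_def)
  then have "ln m \<le> (1 - s) * ln x + s * ln y"
    using \<open>m > 0\<close> unfolding s(3) by (simp add: s_def field_simps)
  then have "(\<alpha> - 1) * ln m \<le> (\<alpha> - 1) * ((1 - s) * ln x + s * ln y)"
    using assms by (simp add: mult_left_mono)
  then have exponent: "(\<alpha> - 1) * ln m + ((1 - t) * a + t * b) / m \<le> (1 - s) * A + s * B"
    unfolding mean A_def B_def by (simp add: algebra_simps)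
  have "m powr \<alpha> * exp (((1 - t) * a + t * b) / m)
      = m * exp ((\<alpha> - 1) * ln m + ((1 - t) * a + t * b) / m)"
    using \<open>m > 0\<close> by (rule powr_mult_exp)
  also have "\<dots> \<le> m * exp ((1 - s) * A + s * B)"
    using \<open>m > 0\<close> exponent by simp
  also have "\<dots> \<le> m * ((1 - s) * exp A + s * exp B)"
    using convex_onD[OF exp_convex, of s A B] s \<open>m > 0\<close> by simp
  also have "\<dots> = (1 - t) * (x * exp A) + t * (y * exp B)"
    using \<open>m > 0\<close> unfolding s(3) by (simp add: s_def field_simps)
  also have "\<dots> = (1 - t) * (x powr \<alpha> * exp (a / x)) + t * (y powr \<alpha> * exp (b / y))"
    using \<open>x > 0\<close> \<open>y > 0\<close> by (simp add: A_def B_def powr_mult_exp)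
  finally show "(\<lambda>(x, u). x powr \<alpha> * exp (u / x)) ((1 - t) *\<^sub>R p + t *\<^sub>R q)
      \<le> (1 - t) * (\<lambda>(x, u). x powr \<alpha> * exp (u / x)) p + t * (\<lambda>(x, u). x powr \<alpha> * exp (u / x)) q"
    by (simp add: p q m_def)
qed

lemma multiplicative_pos_F_da:
  assumes "derivation d" shows "multiplicative_pos (F_da d \<alpha>)"
  unfolding multiplicative_pos_def F_da_def
  by (simp add: derivation_logarithmic[OF assms] powr_mult exp_add)

lemma jensen_convex_pos_F_da:
  assumes "derivation d" and "\<alpha> \<ge> 1" shows "jensen_convex_pos (F_da d \<alpha>)"
  unfolding jensen_convex_pos_def
proof (intro allI impI)
  fix x y :: real
  assume "x > 0" "y > 0"
  have midpoint: "(1 - 1/2) *\<^sub>R (x, d x) + (1/2) *\<^sub>R (y, d y) = ((x + y) / 2, d ((x + y) / 2))"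
    using derivation_midpoint[OF assms(1), of x y] by (simp add: add_divide_distrib)
  show "F_da d \<alpha> ((x + y) / 2) \<le> (F_da d \<alpha> x + F_da d \<alpha> y) / 2"
    using convex_onD[OF convex_on_powr_exp_divide[OF assms(2)], of "1/2" "(x, d x)" "(y, d y)"]
      \<open>x > 0\<close> \<open>y > 0\<close>
    unfolding midpoint by (simp add: F_da_def add_divide_distrib)
qed

lemma F_da_recovers_d:
  assumes "x > 0" shows "d x = x * (ln (F_da d \<alpha> x) - \<alpha> * ln x)"
  using assms by (simp add: F_da_def ln_mult ln_powr)

lemma continuous_on_F_da_imp_continuous_on:
  assumes "continuous_on {0<..} (F_da d \<alpha>)" shows "continuous_on {0<..} d"
proof -
  have "continuous_on {0<..} (\<lambda>x. x * (ln (F_da d \<alpha> x) - \<alpha> * ln x))"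
    by (intro continuous_intros assms) (auto simp: F_da_def)
  then show ?thesis
    by (rule continuous_on_eq) (simp add: F_da_recovers_d[of _ d \<alpha>])
qed

theorem corollary4:
  fixes d :: "real \<Rightarrow> real" and \<alpha> :: real
  assumes "derivation d" and "\<alpha> \<ge> 1"
  shows "multiplicative_pos (F_da d \<alpha>) \<and> jensen_convex_pos (F_da d \<alpha>)
         \<and> (d \<noteq> (\<lambda>_. 0) \<longrightarrow> \<not> continuous_on {0<..} (F_da d \<alpha>))"
  using multiplicative_pos_F_da[OF assms(1)] jensen_convex_pos_F_da[OF assms]
    derivation_continuous_on_pos_eq_0[OF assms(1) continuous_on_F_da_imp_continuous_on]
  by blast

end
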